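(* Consider the slotted content-push system described in the context, operated under a threshold-based policy with integer threshold $C_{\mathrm{thr}}$, $1\le C_{\mathrm{thr}}\le N$: in every slot $k$ with $C_k<C_{\mathrm{thr}}$ the SBS takes the push action $u_k=2$. Assume that the energy $E_p$ required for a push is always available. Then, in the stationary regime, the probability that the SBS pushes a content in a slot is $$\Pr(u_k=2)=\frac{p_c\,C_{\mathrm{thr}}}{N+p_c}.$$
   Context: Time is slotted, $k=1,2,\dots$. There are $N$ contents of interest, ranked $c_1,\dots,c_N$. The content at rank $i$ has popularity (Zipf) $f_i=\frac{i^{-v}}{\sum_{j=1}^N j^{-v}}$ with skew $v\ge 0$. In each slot, with probability $p_c\in(0,1]$, one content is selected uniformly at random (probability $1/N$ each) and removed; the contents ranked below it move up one rank, and a new content enters at rank $N$. Users store the pushed contents, which are always the $C_k$ most popular ones $c_1,\dots,c_{C_k}$, where $C_k\in\{0,\dots,N\}$ is the push state. In each slot the SBS takes an action $u_k\in\{0,1,2\}$ (sleep, unicast, push). A push transmits content $c_{C_k+1}$ to all users at energy cost $E_p$. The push state evolves as follows. If $u_k\in\{0,1\}$: $C_{k+1}=C_k-1$ with probability $p_cC_k/N$, and $C_{k+1}=C_k$ otherwise. If $u_k=2$ (only allowed when $C_k<N$): $C_{k+1}=C_k$ with probability $p_cC_k/N$, and $C_{k+1}=C_k+1$ otherwise. *)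

theory Defs
  imports Complex_Main
begin

text \<open>One-slot transition probability of the push state: from state i to state j
  under action a (0 = sleep, 1 = unicast, 2 = push), with N contents and
  content-change probability pc.\<close>
definition push_trans :: "nat \<Rightarrow> real \<Rightarrow> nat \<Rightarrow> nat \<Rightarrow> nat \<Rightarrow> real" where
  "push_trans N pc a i j =
     (if a = 2 then
        (if j = i then pc * real i / real N else 0)
      + (if j = i + 1 then 1 - pc * real i / real N else 0)
      else
        (if j + 1 = i then pc * real i / real N else 0)
      + (if j = i then 1 - pc * real i / real N else 0))"

definition stationary_dist :: "nat \<Rightarrow> real \<Rightarrow> (nat \<Rightarrow> nat) \<Rightarrow> (nat \<Rightarrow> real) \<Rightarrow> bool" where
  "stationary_dist N pc u st \<longleftrightarrow>
     (\<forall>i\<le>N. st i \<ge> 0) \<and> (\<Sum>i=0..N. st i) = 1 \<and>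
     (\<forall>j\<le>N. st j = (\<Sum>i=0..N. st i * push_trans N pc (u i) i j))"

end

theory Submission
  imports Defs
begin

text \<open>Under the threshold policy the chain is pushed upward from every state below
  the threshold C and only drifts downward from every state at or above it. Hence states
  below C - 1 and above C carry no stationary mass: read upward from 0 resp. downward
  from N, the balance equation at such a state says that its mass equals itself times a
  factor different from 1. The stationary distribution thus lives on C - 1 (push) and
  C (no push); equating the flows between them and using total mass 1 gives the push
  probability.\<close>

lemma push_trans_by_offset:
  "push_trans N pc a i j =
     (if i + 1 = j then (if a = 2 then 1 - pc * real i / real N else 0) else 0)
   + (if i = j then (if a = 2 then pc * real i / real N else 1 - pc * real i / real N) else 0)
   + (if i = j + 1 then (if a = 2 then 0 else pc * real i / real N) else 0)"
  unfolding push_trans_def by auto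

lemma sum_if_Suc_eq:
  fixes f :: "nat \<Rightarrow> real"
  shows "(\<Sum>i=0..N. if i + 1 = j then f i else 0) = (if 0 < j \<and> j - 1 \<le> N then f (j - 1) else 0)"
proof -
  have "(\<Sum>i=0..N. if i + 1 = j then f i else 0) = (\<Sum>i=0..N. if 0 < j \<and> i = j - 1 then f i else 0)"
    by (intro sum.cong) auto
  then show ?thesis
    by (cases "0 < j") (auto simp: sum.delta)
qed

lemma inflow_push_trans:
  fixes st :: "nat \<Rightarrow> real"
  assumes "j \<le> N"
  shows "(\<Sum>i=0..N. st i * push_trans N pc (u i) i j) =
     (if 0 < j then st (j - 1) * (if u (j - 1) = 2 then 1 - pc * real (j - 1) / real N else 0) else 0)
   + st j * (if u j = 2 then pc * real j / real N else 1 - pc * real j / real N)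
   + (if j < N then st (j + 1) * (if u (j + 1) = 2 then 0 else pc * real (j + 1) / real N) else 0)"
  (is "_ = ?rhs")
proof -
  have "(\<Sum>i=0..N. st i * push_trans N pc (u i) i j) =
     (\<Sum>i=0..N. if i + 1 = j then st i * (if u i = 2 then 1 - pc * real i / real N else 0) else 0)
   + (\<Sum>i=0..N. if i = j then st i * (if u i = 2 then pc * real i / real N else 1 - pc * real i / real N) else 0)
   + (\<Sum>i=0..N. if i = j + 1 then st i * (if u i = 2 then 0 else pc * real i / real N) else 0)"
    unfolding push_trans_by_offset sum.distrib[symmetric]
    by (rule sum.cong) (auto simp: algebra_simps)
  also have "\<dots> = ?rhs"
    unfolding sum_if_Suc_eq using assms by (auto simp: sum.delta)
  finally show ?thesis .
qed

lemma fixed_by_factor_ne_one_eq_zero: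
  fixes x q :: real
  assumes "x = x * q" and "q \<noteq> 1"
  shows "x = 0"
  using assms by (metis mult.right_neutral mult_left_cancel)

context
  fixes N C :: nat and pc :: real and u :: "nat \<Rightarrow> nat" and st :: "nat \<Rightarrow> real"
  assumes pc_pos: "0 < pc" and pc_le_1: "pc \<le> 1"
    and C_pos: "1 \<le> C" and C_le_N: "C \<le> N"
    and threshold: "\<forall>i\<le>N. (u i = 2 \<longleftrightarrow> i < C)"
    and stationary: "stationary_dist N pc u st"
begin

lemma N_pos: "real N > 0"
  using C_pos C_le_N by simp

lemma push_iff: "i \<le> N \<Longrightarrow> u i = 2 \<longleftrightarrow> i < C"
  using threshold by blast

lemma balance:
  assumes "j \<le> N"
  shows "st j =
     (if 0 < j then st (j - 1) * (if u (j - 1) = 2 then 1 - pc * real (j - 1) / real N else 0) else 0)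
   + st j * (if u j = 2 then pc * real j / real N else 1 - pc * real j / real N)
   + (if j < N then st (j + 1) * (if u (j + 1) = 2 then 0 else pc * real (j + 1) / real N) else 0)"
  using stationary assms inflow_push_trans[OF assms, of st pc u]
  unfolding stationary_dist_def by metis

lemma stationary_below_threshold_eq_zero:
  "j + 2 \<le> C \<Longrightarrow> st j = 0"
proof (induction j)
  case 0
  have "u 0 = 2" "u 1 = 2" using 0 C_le_N push_iff by auto
  then have "st 0 = st 0 * 0" using balance[of 0] 0 C_le_N by simp
  then show ?case by simp
next
  case (Suc j)
  have j_lt_N: "Suc j < N" using Suc.prems C_le_N by simp
  have "u j = 2" "u (Suc j) = 2" "u (Suc (Suc j)) = 2"
    using push_iff Suc.prems j_lt_N by auto
  with Suc j_lt_N have fixed: "st (Suc j) = st (Suc j) * (pc * real (Suc j) / real N)"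
    using balance[of "Suc j"] by simp
  have "pc * real (Suc j) \<le> real (Suc j)" using pc_le_1 by (simp add: mult_left_le_one_le)
  also have "\<dots> < real N" using j_lt_N by simp
  finally have "pc * real (Suc j) / real N \<noteq> 1" using N_pos by simp
  with fixed show ?case by (rule fixed_by_factor_ne_one_eq_zero)
qed

lemma stationary_above_threshold_eq_zero:
  assumes "C < j" "j \<le> N"
  shows "st j = 0"
proof -
  have "C < j \<longrightarrow> st j = 0" using assms(2)
  proof (induction j rule: inc_induct)
    case base
    show ?case
    proof
      assume "C < N"
      then have "u (N - 1) \<noteq> 2" "u N \<noteq> 2" using push_iff by auto
      with \<open>C < N\<close> have "st N = st N * (1 - pc * real N / real N)"
        using balance[of N] by simp
      moreover have "1 - pc * real N / real N \<noteq> 1" using pc_pos N_pos by simp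
      ultimately show "st N = 0" by (rule fixed_by_factor_ne_one_eq_zero)
    qed
  next
    case (step n)
    show ?case
    proof
      assume "C < n"
      then have "st (Suc n) = 0" "u (n - 1) \<noteq> 2" "u n \<noteq> 2"
        using step push_iff by auto
      with \<open>C < n\<close> step.hyps have "st n = st n * (1 - pc * real n / real N)"
        using balance[of n] by simp
      moreover have "1 - pc * real n / real N \<noteq> 1" using pc_pos N_pos \<open>C < n\<close> by simp
      ultimately show "st n = 0" by (rule fixed_by_factor_ne_one_eq_zero)
    qed
  qed
  with assms(1) show ?thesis by blast
qed

lemma stationary_concentrated:
  assumes "i \<le> N" "i \<noteq> C - 1" "i \<noteq> C"
  shows "st i = 0"
proof (cases "i < C")
  case True
  with assms show ?thesis by (intro stationary_below_threshold_eq_zero) simp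
next
  case False
  with assms show ?thesis by (intro stationary_above_threshold_eq_zero) simp_all
qed

lemma sum_concentrated:
  assumes "C - 1 \<in> A" "finite A" "A \<subseteq> {0..N}"
  shows "(\<Sum>i\<in>A. st i) = st (C - 1) + (if C \<in> A then st C else 0)"
proof -
  have "(\<Sum>i\<in>A. st i) = (\<Sum>i\<in>A. (if i = C - 1 then st (C - 1) else 0) + (if i = C then st C else 0))"
    using assms C_pos stationary_concentrated by (intro sum.cong) auto
  also have "\<dots> = st (C - 1) + (if C \<in> A then st C else 0)"
    using assms by (simp add: sum.distrib sum.delta)
  finally show ?thesis .
qed

lemma stationary_at_last_push_state: "st (C - 1) = pc * real C / (real N + pc)"
proof -
  have "1 = (\<Sum>i=0..N. st i)" using stationary unfolding stationary_dist_def by argo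
  also have "\<dots> = st (C - 1) + st C" using C_le_N by (subst sum_concentrated) auto
  finally have total: "st (C - 1) + st C = 1" by simp
  have "u (C - 1) = 2" "u C \<noteq> 2" using push_iff C_pos C_le_N by auto
  moreover have "C < N \<Longrightarrow> st (C + 1) = 0" by (rule stationary_above_threshold_eq_zero) simp_all
  ultimately have "st C = st (C - 1) * (1 - pc * real (C - 1) / real N) + st C * (1 - pc * real C / real N)"
    using balance[of C] C_pos C_le_N by (auto split: if_splits)
  \<comment> \<open>flow C \<rightarrow> C - 1 equals flow C - 1 \<rightarrow> C\<close>
  then have "st C * (pc * real C / real N) = st (C - 1) * (1 - pc * real (C - 1) / real N)"
    by (simp add: algebra_simps)
  then have "st C * (pc * real C) = st (C - 1) * (real N - pc * (real C - 1))"
    using N_pos C_pos by (simp add: field_simps of_nat_diff)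
  moreover have "st C = 1 - st (C - 1)" using total by simp
  ultimately have "st (C - 1) * (real N + pc) = pc * real C"
    by (simp add: algebra_simps)
  then show ?thesis using N_pos pc_pos by (simp add: field_simps)
qed

lemma push_probability: "(\<Sum>i\<in>{i\<in>{0..N}. u i = 2}. st i) = pc * real C / (real N + pc)"
proof -
  have "{i\<in>{0..N}. u i = 2} = {0..<C}" using push_iff C_le_N by auto
  moreover have "(\<Sum>i\<in>{0..<C}. st i) = st (C - 1)"
    using C_pos C_le_N by (subst sum_concentrated) auto
  ultimately show ?thesis using stationary_at_last_push_state by simp
qed

end

theorem lemma1:
  fixes N Cthr :: nat and pc :: real and u :: "nat \<Rightarrow> nat" and st :: "nat \<Rightarrow> real"
  assumes "0 < pc" and "pc \<le> 1"
    and "1 \<le> Cthr" and "Cthr \<le> N"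
    and "\<forall>i\<le>N. u i \<in> {0, 1, 2}"
    and "\<forall>i\<le>N. (u i = 2 \<longleftrightarrow> i < Cthr)"
    and "stationary_dist N pc u st"
  shows "(\<Sum>i\<in>{i\<in>{0..N}. u i = 2}. st i) = pc * real Cthr / (real N + pc)"
  \<comment> \<open>push_trans treats every action other than 2 alike, so the range of u is irrelevant\<close>
  using assms(1-4,6,7) by (rule push_probability)

end
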